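(* Let $\mathscr{H}$ be a complex Hilbert space and $A\in\mathbb{B}(\mathscr{H})$. Then $$r(A)\leq\left\{\frac{1}{4}\left\||A^2|^2+|(A^* )^2|^2\right\|+\frac{1}{2}\,w(A^4)\right\}^{1/4}.$$
   Context: For $T\in\mathbb{B}(\mathscr{H})$, $|T|=(T^*T)^{1/2}$, $\|T\|$ is the operator norm, $r(T)$ is the spectral radius and $w(T)=\sup\{|\langle Tx,x\rangle|: \|x\|=1\}$ is the numerical radius. *)

theory Defs
  imports "HOL-Analysis.Analysis"
begin

class complex_inner = real_normed_vector +
  fixes scaleC :: "complex \<Rightarrow> 'a \<Rightarrow> 'a"
    and cinner :: "'a \<Rightarrow> 'a \<Rightarrow> complex"
  assumes scaleC_add_right: "scaleC a (x + y) = scaleC a x + scaleC a y"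
    and scaleC_add_left: "scaleC (a + b) x = scaleC a x + scaleC b x"
    and scaleC_scaleC: "scaleC a (scaleC b x) = scaleC (a * b) x"
    and scaleC_one: "scaleC 1 x = x"
    and scaleR_scaleC: "scaleR r x = scaleC (complex_of_real r) x"
    and cinner_commute: "cinner x y = cnj (cinner y x)"
    and cinner_add_left: "cinner (x + y) z = cinner x z + cinner y z"
    and cinner_scaleC_left: "cinner (scaleC c x) y = cnj c * cinner x y"
    and cinner_self_real: "Im (cinner x x) = 0"
    and cinner_self_nonneg: "0 \<le> Re (cinner x x)"
    and cinner_self_eq_zero: "cinner x x = 0 \<longleftrightarrow> x = 0"
    and norm_eq_sqrt_cinner: "norm x = sqrt (Re (cinner x x))"

text \<open>A complex Hilbert space is a complete complex inner product space:
  type class constraint complex_inner plus complete_space.\<close>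

definition bounded_clinear :: "('a::complex_inner \<Rightarrow> 'b::complex_inner) \<Rightarrow> bool" where
  "bounded_clinear T \<longleftrightarrow> bounded_linear T \<and> (\<forall>c x. T (scaleC c x) = scaleC c (T x))"

definition adj :: "('a::complex_inner \<Rightarrow> 'a) \<Rightarrow> ('a \<Rightarrow> 'a)" where
  "adj T = (SOME S. \<forall>x y. cinner (T x) y = cinner x (S y))"

definition abssq :: "('a::complex_inner \<Rightarrow> 'a) \<Rightarrow> ('a \<Rightarrow> 'a)" where
  "abssq T = adj T \<circ> T"

definition cspectrum :: "('a::complex_inner \<Rightarrow> 'a) \<Rightarrow> complex set" where
  "cspectrum T = {l. \<not> (\<exists>S. bounded_clinear S \<and>
        S \<circ> (\<lambda>x. T x - scaleC l x) = id \<and> (\<lambda>x. T x - scaleC l x) \<circ> S = id)}"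

definition spectral_radius :: "('a::complex_inner \<Rightarrow> 'a) \<Rightarrow> real" where
  "spectral_radius T = (if cspectrum T = {} then 0 else Sup (cmod ` cspectrum T))"

definition numerical_radius :: "('a::complex_inner \<Rightarrow> 'a) \<Rightarrow> real" where
  "numerical_radius T = (if {x::'a. norm x = 1} = {} then 0
      else Sup ((\<lambda>x. cmod (cinner (T x) x)) ` {x. norm x = 1}))"

end

theory Submission
  imports Defs
begin

text \<open>If l is in the spectrum of A, then l^2 is in the spectrum of T = A^2 and l^4 in that of
  T^2 = A^4. Every spectral value is bounded by the numerical radius, because for |l| > w(T)
  the operator T - l is coercive and hence invertible (Lax-Milgram, via the projection theorem).
  So |l|^4 <= w(A^4), and |l|^4 <= w(T)^2 <= 1/2 ||T*T + TT*||, since for a unit vector x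
  |<Tx,x>|^2 <= ||Tx|| ||T*x|| <= 1/2 (||Tx||^2 + ||T*x||^2) = 1/2 Re <(T*T + TT*)x, x>.
  Averaging the two bounds gives the estimate.\<close>

section \<open>Complex inner product spaces\<close>

lemma cinner_add_right: "cinner x (y + z) = cinner x y + cinner x z"
  by (metis cinner_commute cinner_add_left complex_cnj_add)

lemma cinner_scaleC_right: "cinner x (scaleC c y) = c * cinner x y"
  by (metis cinner_commute cinner_scaleC_left complex_cnj_cnj complex_cnj_mult)

lemma cinner_zero_left [simp]: "cinner 0 y = 0"
  using cinner_add_left[of 0 0 y] by simp

lemma cinner_zero_right [simp]: "cinner y 0 = 0"
  using cinner_add_right[of y 0 0] by simp

lemma cinner_minus_left [simp]: "cinner (- x) y = - cinner x y"
  using cinner_add_left[of x "- x" y] by (simp add: eq_neg_iff_add_eq_0 add.commute)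

lemma cinner_minus_right [simp]: "cinner y (- x) = - cinner y x"
  using cinner_add_right[of y x "- x"] by (simp add: eq_neg_iff_add_eq_0 add.commute)

lemma cinner_diff_left: "cinner (x - y) z = cinner x z - cinner y z"
  using cinner_add_left[of x "- y" z] by simp

lemma cinner_diff_right: "cinner z (x - y) = cinner z x - cinner z y"
  using cinner_add_right[of z x "- y"] by simp

lemma cinner_scaleR_left: "cinner (scaleR r x) y = of_real r * cinner x y"
  by (simp add: scaleR_scaleC cinner_scaleC_left)

lemma cinner_scaleR_right: "cinner y (scaleR r x) = of_real r * cinner y x"
  by (simp add: scaleR_scaleC cinner_scaleC_right)

lemma cinner_self_eq_norm: "cinner x x = complex_of_real ((norm x)\<^sup>2)"
  using norm_eq_sqrt_cinner[of x] cinner_self_nonneg[of x] cinner_self_real[of x]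
  by (simp add: complex_eq_iff)

lemma power2_norm_eq_cinner: "(norm x)\<^sup>2 = Re (cinner x x)"
  by (simp add: cinner_self_eq_norm)

lemma scaleC_diff_right: "scaleC c (x - y) = scaleC c x - scaleC c y"
  using scaleC_add_right[of c "x - y" y] by (simp add: eq_diff_eq)

lemma cinner_ext: "(\<And>z. cinner z x = cinner z y) \<Longrightarrow> x = y"
  by (metis cinner_diff_right cinner_self_eq_zero right_minus_eq)

lemma norm_scaleC: "norm (scaleC c x) = cmod c * norm x"
proof -
  have "(norm (scaleC c x))\<^sup>2 = Re (cnj c * c * cinner x x)"
    by (simp only: power2_norm_eq_cinner cinner_scaleC_left cinner_scaleC_right mult.assoc
        mult.left_commute)
  also have "\<dots> = Re (of_real ((cmod c)\<^sup>2) * of_real ((norm x)\<^sup>2))"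
    by (simp only: complex_norm_square mult.commute[of "cnj c"] cinner_self_eq_norm)
  also have "\<dots> = (cmod c * norm x)\<^sup>2"
    by (simp only: of_real_mult[symmetric] Re_complex_of_real power_mult_distrib)
  finally show ?thesis by (simp add: power2_eq_iff_nonneg)
qed

lemma cinner_Cauchy_Schwarz: "cmod (cinner x y) \<le> norm x * norm y"
proof (cases "y = 0")
  case False
  define a where "a = (norm y)\<^sup>2"
  define c where "c = cinner y x"
  have a: "a > 0" using False by (simp add: a_def)
  \<comment> \<open>the squared norm of x minus its projection onto y is nonnegative\<close>
  have "cinner (x - scaleC (c / a) y) (x - scaleC (c / a) y)
      = cinner x x - (c / a) * cinner x y - cnj (c / a) * cinner y x
        + cnj (c / a) * (c / a) * cinner y y"
    by (simp add: cinner_diff_left cinner_diff_right cinner_scaleC_left cinner_scaleC_right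
        algebra_simps)
  also have "\<dots> = cinner x x - c * cnj c / a"
  proof -
    have "cinner x y = cnj c" by (simp add: c_def cinner_commute[of x y])
    moreover have "cinner y x = c" by (simp add: c_def)
    moreover have "cinner y y = of_real a" by (simp add: a_def cinner_self_eq_norm)
    moreover have "cnj (c / of_real a) = cnj c / of_real a" by simp
    ultimately show ?thesis using a by (simp only:) (simp add: field_simps)
  qed
  finally have "0 \<le> Re (cinner x x - c * cnj c / a)"
    by (metis cinner_self_nonneg)
  then have "(cmod c)\<^sup>2 / a \<le> (norm x)\<^sup>2"
    by (simp add: cinner_self_eq_norm complex_mult_cnj cmod_power2 del: of_real_power)
  then have "(cmod c)\<^sup>2 \<le> (norm x * norm y)\<^sup>2"
    using a by (simp add: a_def field_simps power_mult_distrib)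
  then have "cmod c \<le> norm x * norm y"
    by (rule power2_le_imp_le) simp
  moreover have "cmod (cinner x y) = cmod c"
    by (simp add: c_def cinner_commute[of x y])
  ultimately show ?thesis by simp
qed simp

lemma power2_norm_add: "(norm (x + y))\<^sup>2 = (norm x)\<^sup>2 + (norm y)\<^sup>2 + 2 * Re (cinner x y)"
proof -
  have "Re (cinner y x) = Re (cinner x y)" by (subst cinner_commute) simp
  then show ?thesis by (simp add: power2_norm_eq_cinner cinner_add_left cinner_add_right)
qed

lemma power2_norm_diff: "(norm (x - y))\<^sup>2 = (norm x)\<^sup>2 + (norm y)\<^sup>2 - 2 * Re (cinner x y)"
  using power2_norm_add[of x "- y"] by simp

lemma parallelogram_law:
  fixes x y :: "'a::complex_inner"
  shows "(norm (x + y))\<^sup>2 + (norm (x - y))\<^sup>2 = 2 * (norm x)\<^sup>2 + 2 * (norm y)\<^sup>2"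
  by (simp add: power2_norm_add power2_norm_diff)

section \<open>Nearest points and the Riesz representation\<close>

definition csubspace :: "'a::complex_inner set \<Rightarrow> bool" where
  "csubspace M \<longleftrightarrow> 0 \<in> M \<and> (\<forall>x\<in>M. \<forall>y\<in>M. x + y \<in> M) \<and> (\<forall>c. \<forall>x\<in>M. scaleC c x \<in> M)"

lemma csubspace_imp_convex: "csubspace M \<Longrightarrow> convex M"
  unfolding csubspace_def convex_def by (simp add: scaleR_scaleC)

lemma Cauchy_if_power2_dist_le:
  fixes f :: "nat \<Rightarrow> 'a::metric_space"
  assumes e: "e \<longlonglongrightarrow> 0" and le: "\<And>i j. (dist (f i) (f j))\<^sup>2 \<le> e i + e j"
  shows "Cauchy f"
proof (rule metric_CauchyI)
  fix r :: real
  assume "0 < r"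
  then obtain N where N: "\<forall>n\<ge>N. norm (e n - 0) < r\<^sup>2 / 2"
    using LIMSEQ_D[OF e, of "r\<^sup>2 / 2"] by auto
  have "dist (f i) (f j) < r" if "N \<le> i" "N \<le> j" for i j
  proof -
    have "e i < r\<^sup>2 / 2" "e j < r\<^sup>2 / 2"
      using N that by fastforce+
    then have "(dist (f i) (f j))\<^sup>2 < r\<^sup>2"
      using le[of i j] by linarith
    then show ?thesis using \<open>0 < r\<close> by (simp add: power_less_imp_less_base)
  qed
  then show "\<exists>N. \<forall>i\<ge>N. \<forall>j\<ge>N. dist (f i) (f j) < r" by blast
qed

lemma nearest_point_exists:
  fixes M :: "'a::{complex_inner,complete_space} set"
  assumes "closed M" and "convex M" and "M \<noteq> {}"
  shows "\<exists>m\<in>M. \<forall>u\<in>M. norm (z - m) \<le> norm (z - u)"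
proof -
  define d where "d = (INF u\<in>M. norm (z - u))"
  define e where "e n = inverse (real (Suc n))" for n
  have bdd: "bdd_below ((\<lambda>u. norm (z - u)) ` M)"
    by (auto intro: bdd_belowI[of _ 0])
  have d_le: "d \<le> norm (z - u)" if "u \<in> M" for u
    unfolding d_def using bdd that by (rule cINF_lower)
  have "0 \<le> d"
    unfolding d_def using assms(3) by (intro cINF_greatest) auto
  have "\<exists>u\<in>M. (norm (z - u))\<^sup>2 < d\<^sup>2 + e n" for n
  proof -
    have "d < sqrt (d\<^sup>2 + e n)"
      using \<open>0 \<le> d\<close> by (intro real_less_rsqrt) (simp add: e_def)
    then obtain u where "u \<in> M" and "norm (z - u) < sqrt (d\<^sup>2 + e n)"
      using cINF_less_iff[OF assms(3) bdd] unfolding d_def by blast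
    then have "(norm (z - u))\<^sup>2 < (sqrt (d\<^sup>2 + e n))\<^sup>2"
      by (intro power_strict_mono) auto
    then show ?thesis using \<open>u \<in> M\<close> by (auto simp: e_def)
  qed
  then have "\<forall>n. \<exists>u. u \<in> M \<and> (norm (z - u))\<^sup>2 < d\<^sup>2 + e n" by blast
  then obtain f where "\<forall>n. f n \<in> M \<and> (norm (z - f n))\<^sup>2 < d\<^sup>2 + e n"
    by (rule choice[THEN exE])
  then have f_in: "\<And>n. f n \<in> M" and f_lt: "\<And>n. (norm (z - f n))\<^sup>2 < d\<^sup>2 + e n"
    by auto
  \<comment> \<open>the parallelogram law with a convex midpoint, which is at least as far from z as d\<close>
  have "(dist (f i) (f j))\<^sup>2 \<le> 2 * e i + 2 * e j" for i j
  proof -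
    define mid where "mid = (1/2) *\<^sub>R f i + (1/2) *\<^sub>R f j"
    have "mid \<in> M"
      unfolding mid_def using assms(2) f_in by (intro convexD) auto
    have "(z - f i) + (z - f j) = 2 *\<^sub>R (z - mid)"
      by (simp add: mid_def algebra_simps scaleR_2)
    then have "2 * d \<le> norm ((z - f i) + (z - f j))"
      using d_le[OF \<open>mid \<in> M\<close>] by simp
    then have "4 * d\<^sup>2 \<le> (norm ((z - f i) + (z - f j)))\<^sup>2"
      using \<open>0 \<le> d\<close> power_mono[of "2 * d" _ 2] by (simp add: power_mult_distrib)
    moreover have "(z - f i) - (z - f j) = f j - f i" by simp
    ultimately show ?thesis
      using parallelogram_law[of "z - f i" "z - f j"] f_lt[of i] f_lt[of j]
      by (simp add: dist_norm norm_minus_commute)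
  qed
  moreover have "(\<lambda>n. 2 * e n) \<longlonglongrightarrow> 0"
    unfolding e_def by (rule tendsto_mult_right_zero[OF LIMSEQ_inverse_real_of_nat])
  ultimately have "Cauchy f"
    by (rule Cauchy_if_power2_dist_le[where e = "\<lambda>n. 2 * e n", rotated])
  then obtain m where lim: "f \<longlonglongrightarrow> m"
    using Cauchy_convergent convergent_def by blast
  have "m \<in> M" using closed_sequentially[OF assms(1) f_in lim] .
  have "(norm (z - m))\<^sup>2 \<le> d\<^sup>2"
  proof (rule LIMSEQ_le)
    show "(\<lambda>n. (norm (z - f n))\<^sup>2) \<longlonglongrightarrow> (norm (z - m))\<^sup>2"
      by (intro tendsto_intros lim)
    show "(\<lambda>n. d\<^sup>2 + e n) \<longlonglongrightarrow> d\<^sup>2"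
      using tendsto_add[OF tendsto_const LIMSEQ_inverse_real_of_nat] by (simp add: e_def)
    show "\<exists>N. \<forall>n\<ge>N. (norm (z - f n))\<^sup>2 \<le> d\<^sup>2 + e n"
      using f_lt less_imp_le by blast
  qed
  then have "norm (z - m) \<le> d"
    using \<open>0 \<le> d\<close> by (rule power2_le_imp_le)
  then show ?thesis
    using \<open>m \<in> M\<close> d_le by force
qed

lemma nearest_point_orthogonal:
  assumes "csubspace M" and "m \<in> M" and "u \<in> M"
    and nearest: "\<And>v. v \<in> M \<Longrightarrow> norm (z - m) \<le> norm (z - v)"
  shows "cinner u (z - m) = 0"
proof (cases "u = 0")
  case False
  define w where "w = z - m"
  define c where "c = cinner u w"
  define t where "t = 1 / (norm u)\<^sup>2"
  have "0 < t" using False by (simp add: t_def)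
  \<comment> \<open>unless c = 0, the point m + v of M is closer to z than m\<close>
  define v where "v = scaleC (of_real t * c) u"
  have "m + v \<in> M"
    using assms(1-3) by (simp add: csubspace_def v_def)
  then have "norm w \<le> norm (w - v)"
    using nearest[of "m + v"] by (simp add: w_def diff_diff_eq)
  then have "(norm w)\<^sup>2 \<le> (norm (w - v))\<^sup>2"
    using norm_ge_zero power_mono by blast
  then have "2 * Re (cinner w v) \<le> (norm v)\<^sup>2"
    by (simp add: power2_norm_diff)
  moreover have "Re (cinner w v) = t * (cmod c)\<^sup>2"
  proof -
    have "cinner w v = of_real t * (c * cnj c)"
      by (simp add: v_def cinner_scaleC_right c_def cinner_commute[of w u] mult.assoc)
    also have "\<dots> = of_real (t * (cmod c)\<^sup>2)"
      by (simp only: complex_norm_square[symmetric] of_real_mult)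
    finally show ?thesis by simp
  qed
  moreover have "(norm v)\<^sup>2 = t * (cmod c)\<^sup>2"
  proof -
    have "norm v = t * cmod c * norm u"
      using \<open>0 < t\<close> by (simp add: v_def norm_scaleC norm_mult)
    then have "(norm v)\<^sup>2 = t * (cmod c)\<^sup>2 * (t * (norm u)\<^sup>2)"
      by (simp add: power_mult_distrib power2_eq_square)
    then show ?thesis using False by (simp add: t_def)
  qed
  ultimately have "t * (cmod c)\<^sup>2 \<le> 0" by linarith
  then have "c = 0"
    using \<open>0 < t\<close> by (simp add: mult_le_0_iff)
  then show ?thesis by (simp add: c_def w_def)
qed simp

lemma orthogonal_projection_exists:
  fixes M :: "'a::{complex_inner,complete_space} set"
  assumes "closed M" and "csubspace M"
  shows "\<exists>m\<in>M. \<forall>u\<in>M. cinner u (z - m) = 0"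
proof -
  have "M \<noteq> {}" using assms(2) by (auto simp: csubspace_def)
  then obtain m where "m \<in> M" and "\<forall>u\<in>M. norm (z - m) \<le> norm (z - u)"
    using nearest_point_exists[OF assms(1) csubspace_imp_convex[OF assms(2)]] by blast
  then show ?thesis
    using nearest_point_orthogonal[OF assms(2)] by blast
qed

lemma Riesz_representation:
  fixes f :: "'a::{complex_inner,complete_space} \<Rightarrow> complex"
  assumes "bounded_linear f" and f_scaleC: "\<And>c x. f (scaleC c x) = c * f x"
  shows "\<exists>v. \<forall>x. f x = cinner v x"
proof (cases "\<forall>x. f x = 0")
  case False
  interpret f: bounded_linear f by fact
  obtain z where "f z \<noteq> 0" using False by auto
  define M where "M = {x. f x = 0}"
  have "closed M"
    unfolding M_def by (rule closed_Collect_eq) (auto intro: linear_continuous_on assms(1))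
  moreover have "csubspace M"
    by (simp add: csubspace_def M_def f.add f_scaleC)
  ultimately obtain m where "m \<in> M" and orth: "\<forall>u\<in>M. cinner u (z - m) = 0"
    using orthogonal_projection_exists by blast
  define w where "w = z - m"
  have "f w = f z" using \<open>m \<in> M\<close> by (simp add: w_def f.diff M_def)
  then have "w \<noteq> 0" using \<open>f z \<noteq> 0\<close> by auto
  \<comment> \<open>x minus a multiple of w lies in the kernel, which is orthogonal to w\<close>
  have "f x = cinner (scaleC (cnj (f w) / of_real ((norm w)\<^sup>2)) w) x" for x
  proof -
    have "f (x - scaleC (f x / f w) w) = 0"
      using \<open>f z \<noteq> 0\<close> \<open>f w = f z\<close> by (simp add: f.diff f_scaleC)
    then have "cinner (x - scaleC (f x / f w) w) w = 0"
      using orth by (simp add: M_def w_def)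
    then have "cinner x w = cnj (f x / f w) * of_real ((norm w)\<^sup>2)"
      by (simp add: cinner_diff_left cinner_scaleC_left cinner_self_eq_norm)
    then have "cinner w x = (f x / f w) * of_real ((norm w)\<^sup>2)"
      by (subst cinner_commute) simp
    then show ?thesis
      using \<open>w \<noteq> 0\<close> \<open>f z \<noteq> 0\<close> \<open>f w = f z\<close> by (simp add: cinner_scaleC_left)
  qed
  then show ?thesis by blast
qed (intro exI[of _ 0], simp)

section \<open>Bounded complex-linear operators and adjoints\<close>

lemma bounded_clinear_imp_bounded_linear: "bounded_clinear T \<Longrightarrow> bounded_linear T"
  by (simp add: bounded_clinear_def)

lemma bounded_clinear_scaleC: "bounded_clinear T \<Longrightarrow> T (scaleC c x) = scaleC c (T x)"
  by (simp add: bounded_clinear_def)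

lemma bounded_clinear_add: "bounded_clinear T \<Longrightarrow> T (x + y) = T x + T y"
  by (simp add: bounded_clinear_def linear_add bounded_linear.linear)

lemma bounded_clinear_diff: "bounded_clinear T \<Longrightarrow> T (x - y) = T x - T y"
  by (simp add: bounded_clinear_def linear_diff bounded_linear.linear)

lemma bounded_clinear_compose:
  "bounded_clinear T \<Longrightarrow> bounded_clinear U \<Longrightarrow> bounded_clinear (T \<circ> U)"
  using bounded_linear_compose[of T U] unfolding bounded_clinear_def o_def by simp

lemma bounded_linear_scaleC_const: "bounded_linear (\<lambda>x::'a::complex_inner. scaleC c x)"
proof (rule bounded_linear_intro[where K = "cmod c"])
  show "scaleC c (x + y) = scaleC c x + scaleC c y" for x y :: 'a
    by (rule scaleC_add_right)
  show "scaleC c (scaleR r x) = scaleR r (scaleC c x)" for r and x :: 'a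
    by (simp add: scaleR_scaleC scaleC_scaleC mult.commute)
  show "norm (scaleC c x) \<le> norm x * cmod c" for x :: 'a
    by (simp add: norm_scaleC mult.commute)
qed

lemma bounded_clinear_minus_scaleC:
  "bounded_clinear T \<Longrightarrow> bounded_clinear (\<lambda>x. T x - scaleC c x)"
  unfolding bounded_clinear_def
  by (auto intro!: bounded_linear_sub bounded_linear_scaleC_const
      simp: scaleC_diff_right scaleC_scaleC mult.commute)

lemma bounded_clinear_plus_scaleC:
  "bounded_clinear T \<Longrightarrow> bounded_clinear (\<lambda>x. T x + scaleC c x)"
  unfolding bounded_clinear_def
  by (auto intro!: bounded_linear_add bounded_linear_scaleC_const
      simp: scaleC_add_right scaleC_scaleC mult.commute)

lemma adj_exists:
  fixes T :: "'a::{complex_inner,complete_space} \<Rightarrow> 'a"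
  assumes T: "bounded_clinear T"
  shows "\<exists>S. \<forall>x y. cinner (T x) y = cinner x (S y)"
proof -
  have "\<exists>v. \<forall>x. cinner y (T x) = cinner v x" for y
  proof (rule Riesz_representation[where f = "\<lambda>x. cinner y (T x)"])
    show "bounded_linear (\<lambda>x. cinner y (T x))"
    proof (rule bounded_linear_intro[where K = "norm y * onorm T"])
      show "cinner y (T (x + z)) = cinner y (T x) + cinner y (T z)" for x z
        by (simp add: bounded_clinear_add[OF T] cinner_add_right)
      show "cinner y (T (r *\<^sub>R x)) = r *\<^sub>R cinner y (T x)" for r x
        by (simp add: scaleR_scaleC bounded_clinear_scaleC[OF T] cinner_scaleC_right
            scaleR_conv_of_real)
      show "norm (cinner y (T x)) \<le> norm x * (norm y * onorm T)" for x
      proof -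
        have "cmod (cinner y (T x)) \<le> norm y * norm (T x)"
          by (rule cinner_Cauchy_Schwarz)
        also have "\<dots> \<le> norm y * (onorm T * norm x)"
          using onorm[OF bounded_clinear_imp_bounded_linear[OF T]] by (simp add: mult_left_mono)
        finally show ?thesis by (simp add: mult_ac)
      qed
    qed
    show "cinner y (T (scaleC c x)) = c * cinner y (T x)" for c x
      by (simp add: bounded_clinear_scaleC[OF T] cinner_scaleC_right)
  qed
  then obtain S where S: "\<forall>y x. cinner y (T x) = cinner (S y) x" by metis
  have "cinner (T x) y = cinner x (S y)" for x y
    by (simp only: cinner_commute[of "T x" y] S cinner_commute[of x "S y"])
  then show ?thesis by blast
qed

lemma cinner_adj:
  fixes T :: "'a::{complex_inner,complete_space} \<Rightarrow> 'a"
  assumes "bounded_clinear T"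
  shows "cinner (T x) y = cinner x (adj T y)"
  using someI_ex[OF adj_exists[OF assms]] unfolding adj_def by blast

lemma adj_unique:
  fixes T :: "'a::{complex_inner,complete_space} \<Rightarrow> 'a"
  assumes "bounded_clinear T" and "\<And>x y. cinner (T x) y = cinner x (S y)"
  shows "adj T = S"
proof
  show "adj T y = S y" for y
    by (rule cinner_ext) (simp add: assms(2)[symmetric] cinner_adj[OF assms(1)])
qed

lemma bounded_clinear_adj:
  fixes T :: "'a::{complex_inner,complete_space} \<Rightarrow> 'a"
  assumes T: "bounded_clinear T"
  shows "bounded_clinear (adj T)"
proof -
  have scaleC: "adj T (scaleC c x) = scaleC c (adj T x)" for c x
    by (rule cinner_ext) (simp add: cinner_adj[OF T, symmetric] cinner_scaleC_right)
  have bound: "norm (adj T y) \<le> norm y * onorm T" for y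
  proof (cases "adj T y = 0")
    case False
    have "(norm (adj T y))\<^sup>2 = Re (cinner (T (adj T y)) y)"
      by (simp add: power2_norm_eq_cinner cinner_adj[OF T])
    also have "\<dots> \<le> cmod (cinner (T (adj T y)) y)"
      by (rule complex_Re_le_cmod)
    also have "\<dots> \<le> norm (T (adj T y)) * norm y"
      by (rule cinner_Cauchy_Schwarz)
    also have "\<dots> \<le> onorm T * norm (adj T y) * norm y"
      using onorm[OF bounded_clinear_imp_bounded_linear[OF T]] by (simp add: mult_right_mono)
    finally show ?thesis
      using False by (simp add: power2_eq_square mult_ac)
  qed (simp add: onorm_pos_le[OF bounded_clinear_imp_bounded_linear[OF T]])
  have "bounded_linear (adj T)"
  proof (rule bounded_linear_intro[where K = "onorm T"])
    show "adj T (x + y) = adj T x + adj T y" for x y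
      by (rule cinner_ext) (simp add: cinner_adj[OF T, symmetric] cinner_add_right)
  qed (simp_all add: scaleR_scaleC scaleC bound)
  then show ?thesis
    using scaleC by (simp add: bounded_clinear_def)
qed

lemma adj_adj:
  fixes T :: "'a::{complex_inner,complete_space} \<Rightarrow> 'a"
  assumes "bounded_clinear T"
  shows "adj (adj T) = T"
  by (rule adj_unique[OF bounded_clinear_adj[OF assms]])
    (simp only: cinner_commute[of "adj T _" _] cinner_adj[OF assms, symmetric]
      cinner_commute[of _ "T _"])

lemma adj_comp:
  fixes T U :: "'a::{complex_inner,complete_space} \<Rightarrow> 'a"
  assumes "bounded_clinear T" and "bounded_clinear U"
  shows "adj (T \<circ> U) = adj U \<circ> adj T"
  by (rule adj_unique[OF bounded_clinear_compose[OF assms]]) (simp add: cinner_adj assms)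

section \<open>Numerical radius\<close>

lemma bdd_above_cinner_unit_sphere:
  fixes T :: "'a::complex_inner \<Rightarrow> 'a"
  assumes "bounded_linear T"
  shows "bdd_above ((\<lambda>x. cmod (cinner (T x) x)) ` {x. norm x = 1})"
proof (rule bdd_aboveI2)
  show "cmod (cinner (T x) x) \<le> onorm T" if "x \<in> {x. norm x = 1}" for x
    using that cinner_Cauchy_Schwarz[of "T x" x] onorm[OF assms, of x] by simp
qed

lemma cmod_cinner_le_numerical_radius:
  fixes T :: "'a::complex_inner \<Rightarrow> 'a"
  assumes T: "bounded_linear T"
  shows "cmod (cinner (T x) x) \<le> numerical_radius T * (norm x)\<^sup>2"
proof (cases "x = 0")
  case False
  define u where "u = scaleR (1 / norm x) x"
  have "norm u = 1" using False by (simp add: u_def)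
  then have "cmod (cinner (T u) u) \<le> numerical_radius T"
    unfolding numerical_radius_def
    using cSUP_upper[OF _ bdd_above_cinner_unit_sphere[OF T], of u] by auto
  then have "cmod (cinner (T u) u) * (norm x)\<^sup>2 \<le> numerical_radius T * (norm x)\<^sup>2"
    by (rule mult_right_mono) simp
  moreover have "cinner (T u) u = of_real (1 / norm x) * (of_real (1 / norm x) * cinner (T x) x)"
    by (simp only: u_def linear_scale[OF bounded_linear.linear[OF T]]
        cinner_scaleR_left cinner_scaleR_right)
  then have "cmod (cinner (T u) u) * (norm x)\<^sup>2 = cmod (cinner (T x) x)"
    using False by (simp add: norm_mult norm_divide power2_eq_square)
  ultimately show ?thesis by simp
qed (simp add: linear_0[OF bounded_linear.linear[OF T]])

lemma numerical_radius_nonneg: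
  fixes T :: "'a::complex_inner \<Rightarrow> 'a"
  assumes "bounded_linear T"
  shows "0 \<le> numerical_radius T"
proof (cases "{x::'a. norm x = 1} = {}")
  case False
  then obtain x :: 'a where "norm x = 1" by auto
  then have "cmod (cinner (T x) x) \<le> numerical_radius T"
    using cmod_cinner_le_numerical_radius[OF assms, of x] by simp
  then show ?thesis
    using norm_ge_zero[of "cinner (T x) x"] by linarith
qed (simp add: numerical_radius_def)

lemma numerical_radius_le:
  fixes T :: "'a::complex_inner \<Rightarrow> 'a"
  assumes "\<And>x. norm x = 1 \<Longrightarrow> cmod (cinner (T x) x) \<le> c" and "0 \<le> c"
  shows "numerical_radius T \<le> c"
  unfolding numerical_radius_def using assms by (auto intro!: cSup_least)

section \<open>Coercive operators and the spectrum\<close>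

lemma closed_range_if_bounded_below:
  fixes B :: "'a::{real_normed_vector,complete_space} \<Rightarrow> 'b::real_normed_vector"
  assumes B: "bounded_linear B" and "0 < d" and below: "\<And>x. d * norm x \<le> norm (B x)"
  shows "closed (range B)"
proof (rule closed_sequential_limits[THEN iffD2], intro allI impI, elim conjE)
  fix y l
  assume "\<forall>n. y n \<in> range B" and "y \<longlonglongrightarrow> l"
  then have "\<forall>n. \<exists>x. y n = B x" by blast
  then obtain x where "\<forall>n. y n = B (x n)" by (rule choice[THEN exE])
  then have y: "y = (\<lambda>n. B (x n))" by auto
  interpret B: bounded_linear B by fact
  have "Cauchy x"
  proof (rule metric_CauchyI)
    fix e :: real
    assume "0 < e"
    then obtain N where N: "\<forall>m\<ge>N. \<forall>n\<ge>N. dist (y m) (y n) < d * e"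
      using metric_CauchyD[OF LIMSEQ_imp_Cauchy[OF \<open>y \<longlonglongrightarrow> l\<close>]] \<open>0 < d\<close> by fastforce
    have "dist (x m) (x n) < e" if "N \<le> m" "N \<le> n" for m n
    proof -
      have "d * dist (x m) (x n) \<le> dist (y m) (y n)"
        using below[of "x m - x n"] by (simp add: y dist_norm B.diff)
      also have "\<dots> < d * e"
        using N that by blast
      finally show ?thesis using \<open>0 < d\<close> by simp
    qed
    then show "\<exists>N. \<forall>m\<ge>N. \<forall>n\<ge>N. dist (x m) (x n) < e" by blast
  qed
  then obtain x0 where "x \<longlonglongrightarrow> x0"
    using Cauchy_convergent convergent_def by blast
  then have "y \<longlonglongrightarrow> B x0"
    unfolding y by (rule B.tendsto)
  then show "l \<in> range B"
    using \<open>y \<longlonglongrightarrow> l\<close> LIMSEQ_unique by blast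
qed

lemma bounded_below_if_coercive:
  fixes B :: "'a::complex_inner \<Rightarrow> 'a"
  assumes "0 \<le> d" and "d * (norm x)\<^sup>2 \<le> cmod (cinner (B x) x)"
  shows "d * norm x \<le> norm (B x)"
proof (cases "x = 0")
  case False
  have "d * norm x * norm x \<le> norm (B x) * norm x"
    using assms(2) cinner_Cauchy_Schwarz[of "B x" x] by (simp add: power2_eq_square)
  then show ?thesis using False by simp
qed (use assms(1) in simp)

lemma surj_if_coercive:
  fixes B :: "'a::{complex_inner,complete_space} \<Rightarrow> 'a"
  assumes B: "bounded_clinear B" and "0 < d"
    and coercive: "\<And>x. d * (norm x)\<^sup>2 \<le> cmod (cinner (B x) x)"
  shows "surj B"
proof -
  have "closed (range B)"
    using bounded_below_if_coercive[OF less_imp_le[OF \<open>0 < d\<close>] coercive]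
    by (rule closed_range_if_bounded_below[OF bounded_clinear_imp_bounded_linear[OF B] \<open>0 < d\<close>])
  moreover have "csubspace (range B)"
  proof -
    have "B 0 = 0"
      using bounded_clinear_diff[OF B, of 0 0] by simp
    then show ?thesis
      unfolding csubspace_def
      by (auto simp: bounded_clinear_add[OF B, symmetric] bounded_clinear_scaleC[OF B, symmetric]
          intro: range_eqI)
  qed
  \<comment> \<open>the component of z orthogonal to the range is annihilated by coercivity\<close>
  ultimately have "z \<in> range B" for z
  proof -
    assume "closed (range B)" "csubspace (range B)"
    then obtain m where "m \<in> range B" and orth: "\<forall>u\<in>range B. cinner u (z - m) = 0"
      using orthogonal_projection_exists by blast
    then have "d * (norm (z - m))\<^sup>2 \<le> 0"
      using coercive[of "z - m"] by simp
    then have "z = m"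
      using \<open>0 < d\<close> by (simp add: mult_le_0_iff)
    then show ?thesis using \<open>m \<in> range B\<close> by simp
  qed
  then show ?thesis by auto
qed

lemma bounded_clinear_inv:
  fixes B :: "'a::complex_inner \<Rightarrow> 'b::complex_inner"
  assumes B: "bounded_clinear B" and "bij B" and "0 < d"
    and below: "\<And>x. d * norm x \<le> norm (B x)"
  shows "bounded_clinear (inv B)"
proof -
  have B_inv: "B (inv B y) = y" for y
    using \<open>bij B\<close> by (simp add: bij_is_surj surj_f_inv_f)
  have inv_eqI: "inv B y = x" if "B x = y" for x y
    using bij_is_inj[OF \<open>bij B\<close>] that by (metis inv_f_f)
  have scaleC: "inv B (scaleC c y) = scaleC c (inv B y)" for c y
    by (rule inv_eqI) (simp add: bounded_clinear_scaleC[OF B] B_inv)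
  have "bounded_linear (inv B)"
  proof (rule bounded_linear_intro[where K = "1 / d"])
    show "inv B (x + y) = inv B x + inv B y" for x y
      by (rule inv_eqI) (simp add: bounded_clinear_add[OF B] B_inv)
    show "inv B (r *\<^sub>R x) = r *\<^sub>R inv B x" for r x
      by (simp add: scaleR_scaleC scaleC)
    show "norm (inv B x) \<le> norm x * (1 / d)" for x
      using below[of "inv B x"] \<open>0 < d\<close> by (simp add: B_inv field_simps)
  qed
  then show ?thesis using scaleC by (simp add: bounded_clinear_def)
qed

lemma coercive_invertible:
  fixes B :: "'a::{complex_inner,complete_space} \<Rightarrow> 'a"
  assumes B: "bounded_clinear B" and "0 < d"
    and coercive: "\<And>x. d * (norm x)\<^sup>2 \<le> cmod (cinner (B x) x)"
  shows "\<exists>S. bounded_clinear S \<and> S \<circ> B = id \<and> B \<circ> S = id"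
proof -
  have below: "d * norm x \<le> norm (B x)" for x
    using bounded_below_if_coercive[OF less_imp_le[OF \<open>0 < d\<close>] coercive] .
  have "inj B"
  proof (rule injI)
    fix x y
    assume "B x = B y"
    then have "d * norm (x - y) \<le> 0"
      using below[of "x - y"] by (simp add: bounded_clinear_diff[OF B])
    then show "x = y" using \<open>0 < d\<close> by (simp add: mult_le_0_iff)
  qed
  moreover have "surj B"
    using surj_if_coercive[OF assms] .
  ultimately have "bounded_clinear (inv B)"
    using bounded_clinear_inv[OF B _ \<open>0 < d\<close> below] by (simp add: bij_def)
  moreover have "inv B \<circ> B = id"
    using \<open>inj B\<close> by (rule inv_o_cancel)
  moreover have "B \<circ> inv B = id"
    using \<open>surj B\<close> by (simp add: surj_iff)
  ultimately show ?thesis by blast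
qed

lemma cmod_le_numerical_radius_if_in_cspectrum:
  fixes T :: "'a::{complex_inner,complete_space} \<Rightarrow> 'a"
  assumes T: "bounded_clinear T" and "l \<in> cspectrum T"
  shows "cmod l \<le> numerical_radius T"
proof (rule ccontr)
  assume "\<not> cmod l \<le> numerical_radius T"
  then have d: "0 < cmod l - numerical_radius T" by simp
  define B where "B = (\<lambda>x. T x - scaleC l x)"
  have "(cmod l - numerical_radius T) * (norm x)\<^sup>2 \<le> cmod (cinner (B x) x)" for x
  proof -
    have Bx: "cinner (B x) x = cinner (T x) x - cnj l * of_real ((norm x)\<^sup>2)"
      by (simp add: B_def cinner_diff_left cinner_scaleC_left cinner_self_eq_norm)
    have "cmod (cnj l * of_real ((norm x)\<^sup>2)) = cmod l * (norm x)\<^sup>2"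
      by (simp add: norm_mult norm_power)
    moreover have "cmod (cnj l * of_real ((norm x)\<^sup>2)) - cmod (cinner (T x) x)
        \<le> cmod (cinner (B x) x)"
      unfolding Bx by (metis norm_minus_commute norm_triangle_ineq2)
    ultimately show ?thesis
      using cmod_cinner_le_numerical_radius[OF bounded_clinear_imp_bounded_linear[OF T], of x]
      by (simp add: algebra_simps)
  qed
  then obtain S where "bounded_clinear S \<and> S \<circ> B = id \<and> B \<circ> S = id"
    using coercive_invertible[OF bounded_clinear_minus_scaleC[OF T] d] by (auto simp: B_def)
  then show False
    using \<open>l \<in> cspectrum T\<close> by (auto simp: cspectrum_def B_def)
qed

lemma power2_in_cspectrum:
  fixes C :: "'a::complex_inner \<Rightarrow> 'a"
  assumes C: "bounded_clinear C" and "l \<in> cspectrum C"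
  shows "l\<^sup>2 \<in> cspectrum (C \<circ> C)"
proof (rule ccontr)
  assume "l\<^sup>2 \<notin> cspectrum (C \<circ> C)"
  then obtain S where S: "bounded_clinear S"
    and SR: "\<And>x. S (C (C x) - scaleC (l\<^sup>2) x) = x"
    and RS: "\<And>y. C (C (S y)) - scaleC (l\<^sup>2) (S y) = y"
    by (auto simp: cspectrum_def fun_eq_iff)
  \<comment> \<open>C^2 - l^2 = (C - l)(C + l) = (C + l)(C - l), so (C + l) S inverts C - l\<close>
  define P where "P = (\<lambda>x. C x + scaleC l x)"
  define Q where "Q = (\<lambda>x. C x - scaleC l x)"
  have QP: "Q (P x) = C (C x) - scaleC (l\<^sup>2) x" for x
    using bounded_clinear_add[OF C] bounded_clinear_scaleC[OF C]
    by (simp add: P_def Q_def scaleC_add_right scaleC_scaleC power2_eq_square)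
  have PQ: "P (Q x) = C (C x) - scaleC (l\<^sup>2) x" for x
    using bounded_clinear_diff[OF C] bounded_clinear_scaleC[OF C]
    by (simp add: P_def Q_def scaleC_diff_right scaleC_scaleC power2_eq_square)
  have right: "Q (P (S y)) = y" for y
    using RS QP by simp
  have left: "P (S (Q x)) = x" for x
    by (metis PQ SR right)
  have "bounded_clinear (P \<circ> S)"
    unfolding P_def by (rule bounded_clinear_compose[OF bounded_clinear_plus_scaleC[OF C] S])
  moreover have "(P \<circ> S) \<circ> Q = id" "Q \<circ> (P \<circ> S) = id"
    using left right by auto
  ultimately show False
    using \<open>l \<in> cspectrum C\<close> by (auto simp: cspectrum_def Q_def)
qed

lemma spectral_radius_le:
  assumes "\<And>l. l \<in> cspectrum T \<Longrightarrow> cmod l \<le> c" and "0 \<le> c"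
  shows "spectral_radius T \<le> c"
  unfolding spectral_radius_def using assms by (auto intro!: cSup_least)

lemma numerical_radius_power2_le:
  fixes T :: "'a::{complex_inner,complete_space} \<Rightarrow> 'a"
  assumes T: "bounded_clinear T"
  shows "(numerical_radius T)\<^sup>2 \<le> onorm (\<lambda>x. adj T (T x) + T (adj T x)) / 2"
proof -
  define X where "X = (\<lambda>x. adj T (T x) + T (adj T x))"
  have T_bl: "bounded_linear T" and adj_bl: "bounded_linear (adj T)"
    using T bounded_clinear_adj bounded_clinear_imp_bounded_linear by blast+
  have X: "bounded_linear X"
    unfolding X_def using bounded_linear_compose[OF adj_bl T_bl] bounded_linear_compose[OF T_bl adj_bl]
    by (rule bounded_linear_add)
  have "(cmod (cinner (T x) x))\<^sup>2 \<le> onorm X / 2" if "norm x = 1" for x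
  proof -
    have "cmod (cinner (T x) x) \<le> norm (T x)"
      using cinner_Cauchy_Schwarz[of "T x" x] that by simp
    moreover have "cmod (cinner (T x) x) \<le> norm (adj T x)"
      using cinner_Cauchy_Schwarz[of x "adj T x"] that by (simp add: cinner_adj[OF T])
    ultimately have "(cmod (cinner (T x) x))\<^sup>2 \<le> norm (T x) * norm (adj T x)"
      by (simp add: power2_eq_square mult_mono)
    also have "\<dots> \<le> ((norm (T x))\<^sup>2 + (norm (adj T x))\<^sup>2) / 2"
      using sum_squares_bound[of "norm (T x)" "norm (adj T x)"] by simp
    also have "(norm (T x))\<^sup>2 + (norm (adj T x))\<^sup>2 = Re (cinner (X x) x)"
      by (simp add: X_def cinner_add_left power2_norm_eq_cinner cinner_adj[OF T]
          cinner_commute[of "adj T (T x)"])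
    also have "\<dots> \<le> cmod (cinner (X x) x)"
      by (rule complex_Re_le_cmod)
    also have "\<dots> \<le> norm (X x) * norm x"
      by (rule cinner_Cauchy_Schwarz)
    also have "\<dots> \<le> onorm X"
      using onorm[OF X, of x] that by simp
    finally show ?thesis by simp
  qed
  then have "numerical_radius T \<le> sqrt (onorm X / 2)"
    using onorm_pos_le[OF X] by (intro numerical_radius_le) (auto intro: real_le_rsqrt)
  then have "(numerical_radius T)\<^sup>2 \<le> (sqrt (onorm X / 2))\<^sup>2"
    by (rule power_mono[OF _ numerical_radius_nonneg[OF T_bl]])
  then show ?thesis
    using onorm_pos_le[OF X] by (simp add: X_def)
qed

lemma cmod_power2_le_if_in_cspectrum:
  fixes T :: "'a::{complex_inner,complete_space} \<Rightarrow> 'a"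
  assumes T: "bounded_clinear T" and "l \<in> cspectrum T"
  shows "(cmod l)\<^sup>2 \<le>
    1/4 * onorm (\<lambda>x. adj T (T x) + T (adj T x)) + 1/2 * numerical_radius (T \<circ> T)"
proof -
  have "(cmod l)\<^sup>2 \<le> (numerical_radius T)\<^sup>2"
    by (intro power_mono cmod_le_numerical_radius_if_in_cspectrum[OF assms]) simp
  also have "\<dots> \<le> onorm (\<lambda>x. adj T (T x) + T (adj T x)) / 2"
    by (rule numerical_radius_power2_le[OF T])
  finally have "(cmod l)\<^sup>2 \<le> onorm (\<lambda>x. adj T (T x) + T (adj T x)) / 2" .
  moreover have "(cmod l)\<^sup>2 \<le> numerical_radius (T \<circ> T)"
    using cmod_le_numerical_radius_if_in_cspectrum[OF bounded_clinear_compose[OF T T]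
        power2_in_cspectrum[OF assms]]
    by (simp add: norm_power)
  ultimately show ?thesis by simp
qed

theorem mainTheorem16:
  fixes A :: "'a::{complex_inner, complete_space} \<Rightarrow> 'a"
  assumes "bounded_clinear A"
  shows "spectral_radius A \<le>
    root 4 (1/4 * onorm (\<lambda>x. abssq (A ^^ 2) x + abssq (adj A ^^ 2) x)
            + 1/2 * numerical_radius (A ^^ 4))"
proof -
  define T where "T = A \<circ> A"
  have T: "bounded_clinear T"
    unfolding T_def using assms assms by (rule bounded_clinear_compose)
  have A2: "A ^^ 2 = T"
    by (simp add: T_def numeral_2_eq_2)
  have A4: "A ^^ 4 = T \<circ> T"
    using funpow_add[of 2 2 A] by (simp add: A2)
  have "adj A ^^ 2 = adj T"
    by (simp add: T_def numeral_2_eq_2 adj_comp[OF assms assms])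
  then have abssq_sum:
    "(\<lambda>x. abssq (A ^^ 2) x + abssq (adj A ^^ 2) x) = (\<lambda>x. adj T (T x) + T (adj T x))"
    by (simp add: A2 abssq_def adj_adj[OF T])
  define R where
    "R = 1/4 * onorm (\<lambda>x. adj T (T x) + T (adj T x)) + 1/2 * numerical_radius (T \<circ> T)"
  have "cmod l ^ 4 \<le> R" if "l \<in> cspectrum A" for l
    using cmod_power2_le_if_in_cspectrum[OF T power2_in_cspectrum[OF assms that, folded T_def]]
    unfolding R_def by (simp add: norm_power flip: power_mult)
  moreover have "cmod l \<le> root 4 R" if "cmod l ^ 4 \<le> R" for l :: complex
    using real_root_le_mono[OF _ that, of 4] by (simp add: real_root_power_cancel)
  moreover have "0 \<le> R"
    using numerical_radius_power2_le[OF T] zero_le_power2[of "numerical_radius T"]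
      numerical_radius_nonneg[OF bounded_clinear_imp_bounded_linear[OF bounded_clinear_compose[OF T T]]]
    unfolding R_def by linarith
  ultimately have "spectral_radius A \<le> root 4 R"
    by (intro spectral_radius_le) auto
  then show ?thesis
    by (simp add: R_def abssq_sum A4)
qed

end
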